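(* Fix a permutation $\pi_\alpha$ of $\mathcal{I}_L$ and $k\in\mathcal{I}_{2L-1}$, and let $\mathcal{M}_k=\{m\in\mathcal{I}_L: k\in\mathcal{J}_{\pi_\alpha^{-1}(m)}\}$. Then $|\mathcal{M}_k|=|\mathcal{L}_k|$, and the square submatrix $A(\mathcal{M}_k,\mathcal{L}_k)$ is invertible over $\mathbb{F}_\gamma$.
   Context: $\mathcal{I}_j=\{1,\dots,j\}$, $\mathcal{I}_0=\emptyset$, $\overline{\mathcal{S}}=\mathcal{I}_L\setminus\mathcal{S}$. Let $\gamma$ be a prime and $\Lambda_1\subseteq\Lambda_2\subseteq\cdots\subseteq\Lambda_{2L}$ a chain of nested lattices in $\mathbb{R}^n$. Let $\pi$ be a permutation of $\mathcal{I}_{2L}$ with $\Lambda_{\pi(2l-1)}\subseteq\Lambda_{\pi(2l)}$ for $l\in\mathcal{I}_L$, and set $\Lambda_{s,l}=\Lambda_{\pi(2l-1)}$, $\Lambda_{c,l}=\Lambda_{\pi(2l)}$. For $k\in\mathcal{I}_{2L-1}$, $\mathcal{L}_k=\{l\in\mathcal{I}_L:\Lambda_{s,l}\subseteq\Lambda_k\subseteq\Lambda_{k+1}\subseteq\Lambda_{c,l}\}$. $A=(a_{ml})\in\mathbb{Z}^{L\times L}$ is an integer matrix whose reduction mod $\gamma$ is invertible over $\mathbb{F}_\gamma$; $A(\mathcal{S},\mathcal{S}')$ is the submatrix with rows indexed by $\mathcal{S}$ and columns by $\mathcal{S}'$ (in increasing order); ranks and invertibility are over $\mathbb{F}_\gamma$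 after reduction mod $\gamma$, a matrix with no rows or no columns has rank $0$, and the $0\times0$ matrix counts as invertible. For a permutation $\pi_\alpha$ of $\mathcal{I}_L$, $\Pi_\alpha(\mathcal{S})=\{\pi_\alpha(i):i\in\mathcal{S}\}$ and for $m\in\mathcal{I}_L$, $\mathcal{J}_m=\{k\in\mathcal{I}_{2L-1}:\operatorname{rank}A(\Pi_\alpha(\overline{\mathcal{I}_{m-1}}),\mathcal{L}_k)=\operatorname{rank}A(\Pi_\alpha(\overline{\mathcal{I}_m}),\mathcal{L}_k)+1\}$. *)

theory Defs
  imports "HOL-Analysis.Analysis" "Jordan_Normal_Form.DL_Rank" "Jordan_Normal_Form.DL_Submatrix"
    "Berlekamp_Zassenhaus.Finite_Field"
begin

definition is_lattice :: "(real ^ 'n) set \<Rightarrow> bool" where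
  "is_lattice \<Lambda> \<longleftrightarrow> (\<exists>B :: real ^ 'n ^ 'n. invertible B \<and>
      \<Lambda> = {B *v z | z. \<forall>i. z $ i \<in> \<int>})"

definition Iset :: "nat \<Rightarrow> nat set" where "Iset j = {1..j}"
definition Icompl :: "nat \<Rightarrow> nat set \<Rightarrow> nat set" where "Icompl L S = Iset L - S"

text \<open>Reduction mod gamma of an integer matrix; the field F_gamma is the type 'p mod_ring,
  gamma = CARD('p).\<close>
definition red :: "int mat \<Rightarrow> 'p::prime_card mod_ring mat" where
  "red A = map_mat of_int A"

text \<open>Submatrix A(S,S') with 1-based row/column index sets (entries of the JNF matrix are 0-based),
  rows and columns taken in increasing order, reduced mod gamma.\<close>
definition subA :: "int mat \<Rightarrow> nat set \<Rightarrow> nat set \<Rightarrow> 'p::prime_card mod_ring mat" where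
  "subA A S S' = submatrix (red A) ((\<lambda>i. i - 1) ` (S \<inter> {1..})) ((\<lambda>j. j - 1) ` (S' \<inter> {1..}))"

definition rankF :: "'p::prime_card mod_ring mat \<Rightarrow> nat" where
  "rankF M = vec_space.rank (dim_row M) M"

definition Lset :: "nat \<Rightarrow> (nat \<Rightarrow> 'v set) \<Rightarrow> (nat \<Rightarrow> nat) \<Rightarrow> nat \<Rightarrow> nat set" where
  "Lset L Lam \<pi> k = {l \<in> Iset L. Lam (\<pi> (2*l - 1)) \<subseteq> Lam k \<and> Lam k \<subseteq> Lam (k+1)
                                  \<and> Lam (k+1) \<subseteq> Lam (\<pi> (2*l))}"

definition Jset :: "'p::prime_card itself \<Rightarrow> nat \<Rightarrow> int mat \<Rightarrow> (nat \<Rightarrow> 'v set) \<Rightarrow> (nat \<Rightarrow> nat)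
                      \<Rightarrow> (nat \<Rightarrow> nat) \<Rightarrow> nat \<Rightarrow> nat set" where
  "Jset _ L A Lam \<pi> \<pi>\<alpha> m = {k \<in> Iset (2*L - 1).
      rankF (subA A (\<pi>\<alpha> ` Icompl L (Iset (m - 1))) (Lset L Lam \<pi> k) :: 'p mod_ring mat)
    = rankF (subA A (\<pi>\<alpha> ` Icompl L (Iset m)) (Lset L Lam \<pi> k) :: 'p mod_ring mat) + 1}"

end

theory Submission
  imports Defs
begin

(* Write R for A mod gamma restricted to the columns L_k, and scan its rows in the order
   pi_alpha L, ..., pi_alpha 1.  Adding one row raises the rank of the rows seen so far by at
   most one, and k lies in J_m exactly when the rank jumps at the row pi_alpha m; so M_k is the set
   of rows at which the rank jumps.  Greedily chosen like this, these rows have the same kernel as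
   all rows of R.  As A is invertible mod gamma, R has full column rank |L_k|: there are |L_k|
   jumps, and the square matrix A(M_k, L_k) has trivial kernel, hence is invertible. *)

(* Row vectors with c columns are functions nat => 'a that vanish from c on.  The rank of a set X
   of rows is the largest number of columns supporting no nonzero vector orthogonal to X, i.e. the
   column rank of the matrix with rows X. *)
definition row_dot :: "nat \<Rightarrow> (nat \<Rightarrow> 'a::field) \<Rightarrow> (nat \<Rightarrow> 'a) \<Rightarrow> 'a" where
  "row_dot c r x = (\<Sum>k<c. r k * x k)"

definition row_kernel :: "nat \<Rightarrow> (nat \<Rightarrow> 'a::field) set \<Rightarrow> (nat \<Rightarrow> 'a) set" where
  "row_kernel c X = {x. (\<forall>k\<ge>c. x k = 0) \<and> (\<forall>r\<in>X. row_dot c r x = 0)}"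

definition indep_cols :: "nat \<Rightarrow> (nat \<Rightarrow> 'a::field) set \<Rightarrow> nat set \<Rightarrow> bool" where
  "indep_cols c X K \<longleftrightarrow> K \<subseteq> {..<c} \<and>
     (\<forall>x. (\<forall>k. k \<notin> K \<longrightarrow> x k = 0) \<longrightarrow> (\<forall>r\<in>X. row_dot c r x = 0) \<longrightarrow> (\<forall>k. x k = 0))"

definition rows_rank :: "nat \<Rightarrow> (nat \<Rightarrow> 'a::field) set \<Rightarrow> nat" where
  "rows_rank c X = Max (card ` {K. indep_cols c X K})"

lemma row_dot_diff: "row_dot c r (\<lambda>k. a * x k - b * y k) = a * row_dot c r x - b * row_dot c r y"
  by (simp add: row_dot_def sum_subtractf sum_distrib_left algebra_simps)

lemma row_dot_zero [simp]: "row_dot c r (\<lambda>_. 0) = 0"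
  by (simp add: row_dot_def)

lemma zero_in_row_kernel [simp]: "(\<lambda>_. 0) \<in> row_kernel c X"
  by (simp add: row_kernel_def)

lemma row_kernel_insert: "row_kernel c (insert r X) = row_kernel c X \<inter> {x. row_dot c r x = 0}"
  by (auto simp: row_kernel_def)

lemma indep_cols_subset: "indep_cols c X K \<Longrightarrow> K \<subseteq> {..<c}"
  by (simp add: indep_cols_def)

lemma indep_cols_finite: "indep_cols c X K \<Longrightarrow> finite K"
  using finite_subset[OF indep_cols_subset] by blast

lemma indep_cols_mono: "X \<subseteq> Y \<Longrightarrow> indep_cols c X K \<Longrightarrow> indep_cols c Y K"
  unfolding indep_cols_def by blast

lemma finite_indep_cols: "finite {K. indep_cols c X K}"
  by (rule finite_subset[of _ "Pow {..<c}"]) (auto dest: indep_cols_subset)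

lemma card_le_rows_rank: "indep_cols c X K \<Longrightarrow> card K \<le> rows_rank c X"
  unfolding rows_rank_def using finite_indep_cols by (intro Max_ge) auto

lemma rows_rank_witness:
  obtains K where "indep_cols c X K" "card K = rows_rank c X"
proof -
  have "indep_cols c X {}"
    by (simp add: indep_cols_def)
  then have "rows_rank c X \<in> card ` {K. indep_cols c X K}"
    unfolding rows_rank_def using finite_indep_cols by (intro Max_in) auto
  then obtain K where "indep_cols c X K" "rows_rank c X = card K" by blast
  with that show ?thesis by simp
qed

lemma rows_rank_le: "rows_rank c X \<le> c"
proof -
  obtain K where "indep_cols c X K" "card K = rows_rank c X"
    by (rule rows_rank_witness)
  then show ?thesis using card_mono[of "{..<c}" K] by (auto dest: indep_cols_subset)
qed

lemma rows_rank_mono: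
  assumes "X \<subseteq> Y" shows "rows_rank c X \<le> rows_rank c Y"
proof -
  obtain K where "indep_cols c X K" "card K = rows_rank c X"
    by (rule rows_rank_witness)
  then show ?thesis using card_le_rows_rank indep_cols_mono[OF assms] by metis
qed

lemma rows_rank_empty: "rows_rank c ({} :: (nat \<Rightarrow> 'a::field) set) = 0"
proof -
  have "K = {}" if "indep_cols c ({} :: (nat \<Rightarrow> 'a) set) K" for K
  proof -
    have "\<forall>x. (\<forall>k. k \<notin> K \<longrightarrow> x k = 0) \<longrightarrow> (\<forall>k. x k = (0::'a))"
      using that unfolding indep_cols_def by simp
    from this[rule_format, of "\<lambda>k. if k \<in> K then 1 else 0"]
    have "\<forall>k. (if k \<in> K then 1 else 0 :: 'a) = 0" by simp
    then show ?thesis by (metis (mono_tags) equals0I one_neq_zero)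
  qed
  then show ?thesis by (metis rows_rank_witness card.empty)
qed

lemma rows_rank_eq_if_row_kernel_trivial:
  assumes "row_kernel c X = {\<lambda>_. 0}"
  shows "rows_rank c X = c"
proof -
  have "indep_cols c X {..<c}"
    using assms unfolding indep_cols_def row_kernel_def by (force simp: fun_eq_iff)
  then show ?thesis using card_le_rows_rank[of c X] rows_rank_le[of c X] by fastforce
qed

lemma rows_rank_insert_le: "rows_rank c (insert r X) \<le> rows_rank c X + 1"
proof -
  obtain K where K: "indep_cols c (insert r X) K" "card K = rows_rank c (insert r X)"
    by (rule rows_rank_witness)
  show ?thesis
  proof (cases "indep_cols c X K")
    case True
    then show ?thesis using card_le_rows_rank K(2) by fastforce
  next
    case False
    then obtain x0 k0 where x0: "\<forall>k. k \<notin> K \<longrightarrow> x0 k = 0" "\<forall>r\<in>X. row_dot c r x0 = 0" "x0 k0 \<noteq> 0"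
      using indep_cols_subset[OF K(1)] unfolding indep_cols_def by blast
    have "k0 \<in> K" using x0 by auto
    have d0: "row_dot c r x0 \<noteq> 0"
      using K(1) x0 unfolding indep_cols_def by blast
    txt \<open>For \<open>y\<close> on \<open>K - {k0}\<close> orthogonal to \<open>X\<close>, the combination of \<open>y\<close> and \<open>x0\<close> that is
      orthogonal to \<open>r\<close> vanishes; its coordinate \<open>k0\<close> then forces \<open>y = 0\<close>.\<close>
    have "indep_cols c X (K - {k0})"
      unfolding indep_cols_def
    proof (intro conjI allI impI)
      show "K - {k0} \<subseteq> {..<c}" using indep_cols_subset[OF K(1)] by auto
      fix y k assume y: "\<forall>k. k \<notin> K - {k0} \<longrightarrow> y k = 0" "\<forall>r\<in>X. row_dot c r y = 0"
      define z where "z = (\<lambda>k. row_dot c r x0 * y k - row_dot c r y * x0 k)"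
      have "\<forall>r'\<in>insert r X. row_dot c r' z = 0" "\<forall>k. k \<notin> K \<longrightarrow> z k = 0"
        using y x0 by (auto simp: z_def row_dot_diff)
      then have z0: "\<forall>k. z k = 0"
        using K(1) unfolding indep_cols_def by blast
      have "row_dot c r y * x0 k0 = 0"
        using z0 y(1) by (auto simp: z_def dest: spec[of _ k0])
      then have "row_dot c r y = 0" using x0(3) by simp
      then show "y k = 0"
        using z0 d0 by (auto simp: z_def dest: spec[of _ k])
    qed
    then have "card (K - {k0}) \<le> rows_rank c X" by (rule card_le_rows_rank)
    then show ?thesis using K \<open>k0 \<in> K\<close> indep_cols_finite[OF K(1)] by simp
  qed
qed

lemma maximal_indep_cols_extend:
  assumes K: "indep_cols c X K" "card K = rows_rank c X" and k: "k < c" "k \<notin> K"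
  obtains w where "\<forall>j. j \<notin> insert k K \<longrightarrow> w j = 0" "\<forall>r\<in>X. row_dot c r w = 0" "w k \<noteq> 0"
proof -
  have "\<not> indep_cols c X (insert k K)"
    using card_le_rows_rank[of c X "insert k K"] K k indep_cols_finite[OF K(1)] by auto
  then obtain w j where w: "\<forall>j. j \<notin> insert k K \<longrightarrow> w j = 0" "\<forall>r\<in>X. row_dot c r w = 0" "w j \<noteq> 0"
    using indep_cols_subset[OF K(1)] k unfolding indep_cols_def by auto
  moreover have "w k \<noteq> 0"
    using K(1) w unfolding indep_cols_def by (metis insert_iff)
  ultimately show ?thesis using that by blast
qed

lemma kernel_vector_on_one_more_col:
  assumes K: "indep_cols c X K" "card K = rows_rank c X"
    and "x \<in> row_kernel c X" "row_dot c r x \<noteq> 0"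
  shows "\<exists>k z. k < c \<and> k \<notin> K \<and> (\<forall>j. j \<notin> insert k K \<longrightarrow> z j = 0)
           \<and> (\<forall>r'\<in>X. row_dot c r' z = 0) \<and> row_dot c r z \<noteq> 0"
  using assms(3,4)
proof (induction "card {j. j \<notin> K \<and> x j \<noteq> 0}" arbitrary: x rule: less_induct)
  case less
  have xc: "\<forall>j\<ge>c. x j = 0" and xX: "\<forall>r'\<in>X. row_dot c r' x = 0"
    using less.prems(1) by (auto simp: row_kernel_def)
  have fin: "finite {j. j \<notin> K \<and> x j \<noteq> 0}"
    by (rule finite_subset[of _ "{..<c}"]) (use xc in \<open>auto simp: not_less[symmetric]\<close>)
  have "\<exists>k1. k1 \<notin> K \<and> x k1 \<noteq> 0"
  proof (rule ccontr)
    assume "\<nexists>k1. k1 \<notin> K \<and> x k1 \<noteq> 0"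
    then have "\<forall>k. x k = 0" using K(1) xX unfolding indep_cols_def by blast
    then show False using less.prems(2) row_dot_zero by (metis ext)
  qed
  then obtain k1 where k1: "k1 \<notin> K" "x k1 \<noteq> 0" by blast
  have "k1 < c" using xc k1 not_less by blast
  then obtain w where w: "\<forall>j. j \<notin> insert k1 K \<longrightarrow> w j = 0" "\<forall>r\<in>X. row_dot c r w = 0" "w k1 \<noteq> 0"
    using maximal_indep_cols_extend[OF K _ k1(1)] by blast
  show ?case
  proof (cases "row_dot c r w = 0")
    case False
    then show ?thesis using k1 \<open>k1 < c\<close> w by blast
  next
    case True
    txt \<open>Eliminating the coordinate \<open>k1\<close> of \<open>x\<close> by a multiple of \<open>w\<close> shrinks its support
      outside \<open>K\<close>.\<close>
    define y where "y = (\<lambda>j. 1 * x j - (x k1 / w k1) * w j)"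
    have "y \<in> row_kernel c X"
    proof -
      have "\<forall>j\<ge>c. y j = 0"
      proof (intro allI impI)
        fix j assume "c \<le> j"
        then have "j \<notin> insert k1 K" using indep_cols_subset[OF K(1)] \<open>k1 < c\<close> by auto
        then show "y j = 0" using xc w \<open>c \<le> j\<close> by (simp add: y_def)
      qed
      moreover have "\<forall>r'\<in>X. row_dot c r' y = 0"
        using xX w unfolding y_def row_dot_diff by simp
      ultimately show ?thesis by (simp add: row_kernel_def)
    qed
    moreover have "row_dot c r y \<noteq> 0"
      using less.prems(2) True unfolding y_def row_dot_diff by simp
    moreover have "card {j. j \<notin> K \<and> y j \<noteq> 0} < card {j. j \<notin> K \<and> x j \<noteq> 0}"
    proof (rule psubset_card_mono[OF fin])
      have "{j. j \<notin> K \<and> y j \<noteq> 0} \<subseteq> {j. j \<notin> K \<and> x j \<noteq> 0} - {k1}"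
        using w(1,3) by (auto simp: y_def)
      then show "{j. j \<notin> K \<and> y j \<noteq> 0} \<subset> {j. j \<notin> K \<and> x j \<noteq> 0}"
        using k1 by blast
    qed
    ultimately show ?thesis using less.hyps[of y] by blast
  qed
qed

lemma rows_rank_insert_if_not_orthogonal:
  assumes "x \<in> row_kernel c X" "row_dot c r x \<noteq> 0"
  shows "rows_rank c (insert r X) = rows_rank c X + 1"
proof -
  obtain K where K: "indep_cols c X K" "card K = rows_rank c X"
    by (rule rows_rank_witness)
  obtain k z where kz: "k < c" "k \<notin> K" "\<forall>j. j \<notin> insert k K \<longrightarrow> z j = 0"
     "\<forall>r'\<in>X. row_dot c r' z = 0" "row_dot c r z \<noteq> 0"
    using kernel_vector_on_one_more_col[OF K assms] by blast
  have "z k \<noteq> 0"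
  proof
    assume "z k = 0"
    then have "\<forall>j. z j = 0" using K(1) kz unfolding indep_cols_def by (metis insertE)
    then show False using kz(5) row_dot_zero by (metis ext)
  qed
  txt \<open>Subtracting the right multiple of \<open>z\<close> from a vector on \<open>insert k K\<close> orthogonal to
    \<open>insert r X\<close> leaves a vector on \<open>K\<close>, which is zero; orthogonality to \<open>r\<close> kills the multiple.\<close>
  have "indep_cols c (insert r X) (insert k K)"
    unfolding indep_cols_def
  proof (intro conjI allI impI)
    show "insert k K \<subseteq> {..<c}" using indep_cols_subset[OF K(1)] kz by auto
    fix y j assume y: "\<forall>j. j \<notin> insert k K \<longrightarrow> y j = 0" "\<forall>r'\<in>insert r X. row_dot c r' y = 0"
    define y' where "y' = (\<lambda>j. 1 * y j - (y k / z k) * z j)"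
    have "\<forall>j. j \<notin> K \<longrightarrow> y' j = 0"
    proof (intro allI impI)
      fix j assume "j \<notin> K"
      then show "y' j = 0" using y kz \<open>z k \<noteq> 0\<close> by (cases "j = k") (auto simp: y'_def)
    qed
    moreover have "\<forall>r'\<in>X. row_dot c r' y' = 0"
      using y kz unfolding y'_def row_dot_diff by simp
    ultimately have y'0: "\<forall>j. y' j = 0" using K(1) unfolding indep_cols_def by blast
    then have "row_dot c r y' = 0"
      using row_dot_zero[of c r] by (metis ext)
    then have "(y k / z k) * row_dot c r z = 0"
      using y unfolding y'_def row_dot_diff by simp
    then have "y k = 0" using kz(5) \<open>z k \<noteq> 0\<close> by simp
    then show "y j = 0" using y'0 by (simp add: y'_def)
  qed
  then have "rows_rank c X + 1 \<le> rows_rank c (insert r X)"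
    using card_le_rows_rank K kz(2) indep_cols_finite[OF K(1)] by fastforce
  then show ?thesis using rows_rank_insert_le[of c r X] by simp
qed

lemma row_kernel_insert_eq_if_rows_rank_eq:
  assumes "rows_rank c (insert r X) = rows_rank c X"
  shows "row_kernel c (insert r X) = row_kernel c X"
  using rows_rank_insert_if_not_orthogonal[of _ c X r] assms by (force simp: row_kernel_insert)

lemma card_unit_descents:
  fixes h :: "nat \<Rightarrow> nat"
  assumes "n \<le> Suc N" and "\<And>m. m \<in> {n..N} \<Longrightarrow> h m = h (Suc m) \<or> h m = h (Suc m) + 1"
  shows "card {m \<in> {n..N}. h m = h (Suc m) + 1} + h (Suc N) = h n"
  using assms
proof (induction n rule: inc_induct)
  case (step n)
  have "{m \<in> {n..N}. h m = h (Suc m) + 1}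
      = (if h n = h (Suc n) + 1 then insert n else id) {m \<in> {Suc n..N}. h m = h (Suc m) + 1}"
    using step.hyps by (auto simp: le_eq_less_or_eq Suc_le_eq)
  moreover have "h n = h (Suc n) \<or> h n = h (Suc n) + 1"
    using step.hyps step.prems by simp
  ultimately show ?case using step.IH step.prems by auto
qed simp

(* For the rows reduced_row A L_k pi_alpha below this is the set of m with k in J_m. *)
definition rank_jumps :: "nat \<Rightarrow> (nat \<Rightarrow> nat \<Rightarrow> 'a::field) \<Rightarrow> nat \<Rightarrow> nat \<Rightarrow> nat set" where
  "rank_jumps c f n N =
     {m \<in> {n..N}. rows_rank c (f ` {m..N}) = rows_rank c (f ` {Suc m..N}) + 1}"

lemma image_atLeastAtMost_insert: "m \<le> N \<Longrightarrow> f ` {m..N} = insert (f m) (f ` {Suc m..N})"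
  by (simp flip: atLeastAtMost_insertL)

lemma rows_rank_suffix_step:
  assumes "m \<le> N"
  shows "rows_rank c (f ` {m..N}) = rows_rank c (f ` {Suc m..N})
    \<or> rows_rank c (f ` {m..N}) = rows_rank c (f ` {Suc m..N}) + 1"
  using rows_rank_insert_le[of c "f m" "f ` {Suc m..N}"]
    rows_rank_mono[OF subset_insertI, of c "f ` {Suc m..N}" "f m"]
    image_atLeastAtMost_insert[OF assms, of f] by auto

lemma card_rank_jumps:
  assumes "n \<le> Suc N"
  shows "card (rank_jumps c f n N) = rows_rank c (f ` {n..N})"
proof -
  have "rows_rank c (f ` {m..N}) = rows_rank c (f ` {Suc m..N})
    \<or> rows_rank c (f ` {m..N}) = rows_rank c (f ` {Suc m..N}) + 1" if "m \<in> {n..N}" for m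
    using that by (intro rows_rank_suffix_step) simp
  from card_unit_descents[where h = "\<lambda>m. rows_rank c (f ` {m..N})", OF assms this] show ?thesis
    unfolding rank_jumps_def by (simp add: rows_rank_empty)
qed

lemma row_kernel_rank_jumps:
  assumes "n \<le> Suc N"
  shows "row_kernel c (f ` rank_jumps c f n N) = row_kernel c (f ` {n..N})"
  using assms
proof (induction n rule: inc_induct)
  case (step n)
  then have n: "n \<le> N" by simp
  note suffix = image_atLeastAtMost_insert[OF n, of f]
  show ?case
  proof (cases "n \<in> rank_jumps c f n N")
    case True
    then have "rank_jumps c f n N = insert n (rank_jumps c f (Suc n) N)"
      by (auto simp: rank_jumps_def)
    then show ?thesis using step.IH suffix by (simp add: row_kernel_insert)
  next
    case False
    then have "rank_jumps c f n N = rank_jumps c f (Suc n) N"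
      by (auto simp: rank_jumps_def le_eq_less_or_eq Suc_le_eq)
    moreover have "rows_rank c (insert (f n) (f ` {Suc n..N})) = rows_rank c (f ` {Suc n..N})"
      using False n rows_rank_suffix_step[OF n, of c f] suffix by (auto simp: rank_jumps_def)
    then have "row_kernel c (f ` {n..N}) = row_kernel c (f ` {Suc n..N})"
      unfolding suffix by (rule row_kernel_insert_eq_if_rows_rank_eq)
    ultimately show ?thesis using step.IH by simp
  qed
qed (simp add: rank_jumps_def)

definition row_funs :: "'a::field mat \<Rightarrow> (nat \<Rightarrow> 'a) set" where
  "row_funs B = (\<lambda>i k. if k < dim_col B then B $$ (i, k) else 0) ` {..<dim_row B}"

lemma orthogonal_row_funs_iff:
  "(\<forall>r\<in>row_funs B. row_dot (dim_col B) r x = 0)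
     \<longleftrightarrow> (\<forall>i<dim_row B. (\<Sum>k<dim_col B. B $$ (i, k) * x k) = 0)"
proof -
  have "row_dot (dim_col B) (\<lambda>k. if k < dim_col B then B $$ (i, k) else 0) x
      = (\<Sum>k<dim_col B. B $$ (i, k) * x k)" for i
    unfolding row_dot_def by (intro sum.cong) auto
  then show ?thesis unfolding row_funs_def by auto
qed

context vec_space
begin

lemma lincomb_col_image:
  assumes B: "B \<in> carrier_mat n c" and K: "K \<subseteq> {..<c}" and inj: "inj_on (col B) K"
    and supp: "\<forall>k. k \<notin> K \<longrightarrow> x k = 0" and a: "\<forall>k\<in>K. a (col B k) = x k"
  shows "lincomb a (col B ` K) = vec n (\<lambda>i. \<Sum>k<c. B $$ (i, k) * x k)"
proof (rule eq_vecI)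
  have fin: "finite (col B ` K)" using K finite_subset by blast
  have sub: "col B ` K \<subseteq> carrier_vec n" using B by auto
  show "dim_vec (lincomb a (col B ` K)) = dim_vec (vec n (\<lambda>i. \<Sum>k<c. B $$ (i, k) * x k))"
    using lincomb_dim[OF fin sub] by simp
  fix i assume "i < dim_vec (vec n (\<lambda>i. \<Sum>k<c. B $$ (i, k) * x k))"
  then have i: "i < n" by simp
  have "lincomb a (col B ` K) $ i = (\<Sum>v\<in>col B ` K. a v * v $ i)"
    by (rule lincomb_index[OF i sub])
  also have "\<dots> = (\<Sum>k\<in>K. a (col B k) * col B k $ i)"
    by (simp add: sum.reindex[OF inj])
  also have "\<dots> = (\<Sum>k\<in>K. B $$ (i, k) * x k)"
    using B K i a by (intro sum.cong) auto
  also have "\<dots> = (\<Sum>k<c. B $$ (i, k) * x k)"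
    using K supp by (intro sum.mono_neutral_left) auto
  finally show "lincomb a (col B ` K) $ i = vec n (\<lambda>i. \<Sum>k<c. B $$ (i, k) * x k) $ i"
    using i by simp
qed

lemma indep_cols_imp_lin_indpt:
  assumes B: "B \<in> carrier_mat n c" and ind: "indep_cols c (row_funs B) K"
  shows "inj_on (col B) K \<and> lin_indpt (col B ` K)"
proof
  have K: "K \<subseteq> {..<c}" using indep_cols_subset[OF ind] .
  have H: "\<forall>k. x k = 0"
    if "\<forall>k. k \<notin> K \<longrightarrow> x k = 0" "\<forall>i<n. (\<Sum>k<c. B $$ (i, k) * x k) = 0" for x
  proof -
    have "\<forall>r\<in>row_funs B. row_dot c r x = 0"
      using orthogonal_row_funs_iff[of B x] B that(2) by simp
    then show ?thesis using ind that(1) unfolding indep_cols_def by blast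
  qed
  show inj: "inj_on (col B) K"
  proof (rule inj_onI, rule ccontr)
    fix k1 k2 assume k: "k1 \<in> K" "k2 \<in> K" "col B k1 = col B k2" "k1 \<noteq> k2"
    define x where "x = (\<lambda>k. if k = k1 then 1 else if k = k2 then - 1 else (0::'a))"
    have "(\<Sum>k<c. B $$ (i, k) * x k) = 0" if "i < n" for i
    proof -
      have "(\<Sum>k<c. B $$ (i, k) * x k) = (\<Sum>k\<in>{k1, k2}. B $$ (i, k) * x k)"
        using K k by (intro sum.mono_neutral_right) (auto simp: x_def)
      also have "\<dots> = B $$ (i, k1) - B $$ (i, k2)"
        using k(4) by (simp add: x_def)
      also have "\<dots> = col B k1 $ i - col B k2 $ i"
        using k(1,2) K B that by (simp add: subset_iff)
      finally show ?thesis using k(3) by simp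
    qed
    moreover have "\<forall>k. k \<notin> K \<longrightarrow> x k = 0" using k by (simp add: x_def)
    ultimately have "\<forall>k. x k = 0" using H by blast
    then show False using k(4) by (auto simp: x_def dest: spec[of _ k1])
  qed
  show "lin_indpt (col B ` K)"
  proof
    assume "lin_dep (col B ` K)"
    then obtain A a v where A: "finite A" "A \<subseteq> col B ` K" "lincomb a A = 0\<^sub>v n" "v \<in> A" "a v \<noteq> 0"
      unfolding lin_dep_def by auto
    define K' where "K' = {k \<in> K. col B k \<in> A}"
    have "A = col B ` K'" using A(2) unfolding K'_def by auto
    define x where "x = (\<lambda>k. if k \<in> K' then a (col B k) else 0)"
    have "lincomb a A = vec n (\<lambda>i. \<Sum>k<c. B $$ (i, k) * x k)"
      unfolding \<open>A = col B ` K'\<close> using K inj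
      by (intro lincomb_col_image[OF B]) (auto simp: K'_def x_def intro: inj_on_subset)
    then have eq: "vec n (\<lambda>i. \<Sum>k<c. B $$ (i, k) * x k) = 0\<^sub>v n"
      using A(3) by simp
    have "\<forall>i<n. (\<Sum>k<c. B $$ (i, k) * x k) = 0"
    proof (intro allI impI)
      fix i assume "i < n"
      then show "(\<Sum>k<c. B $$ (i, k) * x k) = 0"
        using arg_cong[OF eq, of "\<lambda>w. vec_index w i"] by simp
    qed
    moreover have "\<forall>k. k \<notin> K \<longrightarrow> x k = 0" by (simp add: x_def K'_def)
    ultimately have "\<forall>k. x k = 0" using H by blast
    moreover obtain k0 where "k0 \<in> K'" "col B k0 = v" using \<open>A = col B ` K'\<close> A(4) by blast
    ultimately show False using A(5) by (auto simp: x_def dest: spec[of _ k0])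
  qed
qed

lemma lin_indpt_imp_indep_cols:
  assumes B: "B \<in> carrier_mat n c" and K: "K \<subseteq> {..<c}"
    and inj: "inj_on (col B) K" and indpt: "lin_indpt (col B ` K)"
  shows "indep_cols c (row_funs B) K"
  unfolding indep_cols_def
proof (intro conjI allI impI)
  show "K \<subseteq> {..<c}" using K .
  fix x k0 assume supp: "\<forall>k. k \<notin> K \<longrightarrow> x k = 0" and orth: "\<forall>r\<in>row_funs B. row_dot c r x = 0"
  have sums: "\<forall>i<n. (\<Sum>k<c. B $$ (i, k) * x k) = 0"
    using orth orthogonal_row_funs_iff[of B x] B by simp
  show "x k0 = 0"
  proof (rule ccontr)
    assume "x k0 \<noteq> 0"
    define K' where "K' = {k \<in> K. x k \<noteq> 0}"
    have inj': "inj_on (col B) K'" by (rule inj_on_subset[OF inj]) (simp add: K'_def)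
    define a where "a = (\<lambda>v. x (the_inv_into K' (col B) v))"
    have a: "\<forall>k\<in>K'. a (col B k) = x k"
      using the_inv_into_f_f[OF inj'] by (simp add: a_def)
    have "K' \<subseteq> {..<c}" "\<forall>k. k \<notin> K' \<longrightarrow> x k = 0"
      using K supp unfolding K'_def by auto
    then have "lincomb a (col B ` K') = vec n (\<lambda>i. \<Sum>k<c. B $$ (i, k) * x k)"
      using lincomb_col_image[OF B _ inj' _ a] by blast
    also have "\<dots> = 0\<^sub>v n" using sums by (intro eq_vecI) auto
    finally have lc: "lincomb a (col B ` K') = 0\<^sub>v n" .
    have "k0 \<in> K'" using \<open>x k0 \<noteq> 0\<close> supp unfolding K'_def by blast
    then have "a (col B k0) \<noteq> 0"
      using \<open>x k0 \<noteq> 0\<close> a by simp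
    moreover have "finite (col B ` K')"
      using K by (intro finite_imageI finite_subset[OF _ finite_lessThan[of c]]) (auto simp: K'_def)
    moreover have "col B ` K' \<subseteq> col B ` K" unfolding K'_def by blast
    ultimately have "lin_dep (col B ` K)"
      unfolding lin_dep_def using lc \<open>k0 \<in> K'\<close>
      by (intro exI[of _ "col B ` K'"] exI[of _ a] exI[of _ "col B k0"]) auto
    then show False using indpt by simp
  qed
qed

lemma rank_eq_rows_rank:
  assumes B: "B \<in> carrier_mat n c"
  shows "rank B = rows_rank c (row_funs B)"
proof (rule antisym)
  have cols: "set (cols B) = col B ` {..<c}" using B unfolding cols_def by auto
  obtain S where S: "maximal S (\<lambda>T. T \<subseteq> set (cols B) \<and> lin_indpt T)"
    using maximal_exists_superset[of "set (cols B)" "\<lambda>T. T \<subseteq> set (cols B) \<and> lin_indpt T" "{}"]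
    by (auto simp: lin_dep_def)
  then obtain K where K: "K \<subseteq> {..<c}" "inj_on (col B) K" "S = col B ` K"
    using cols subset_image_inj[of S "col B" "{..<c}"] unfolding maximal_def by auto
  have "rank B = card K"
    using rank_card_indpt[OF B S] K card_image by simp
  also have "\<dots> \<le> rows_rank c (row_funs B)"
    using S K by (intro card_le_rows_rank lin_indpt_imp_indep_cols[OF B]) (auto simp: maximal_def)
  finally show "rank B \<le> rows_rank c (row_funs B)" .
  obtain K where K: "indep_cols c (row_funs B) K" "card K = rows_rank c (row_funs B)"
    by (rule rows_rank_witness)
  have "card (col B ` K) \<le> rank B"
    using indep_cols_imp_lin_indpt[OF B K(1)] indep_cols_subset[OF K(1)] cols
    by (intro rank_ge_card_indpt[OF B]) auto
  then show "rows_rank c (row_funs B) \<le> rank B"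
    using K card_image[of "col B" K] indep_cols_imp_lin_indpt[OF B K(1)] by simp
qed

end

lemma bij_betw_pick: "finite I \<Longrightarrow> bij_betw (pick I) {..<card I} I"
proof -
  assume fin: "finite I"
  have "inj_on (pick I) {..<card I}"
  proof (rule inj_onI)
    fix a b assume ab: "a \<in> {..<card I}" "b \<in> {..<card I}" "pick I a = pick I b"
    have "pick I a < pick I b" if "a < b" using that ab(2) by (intro pick_mono) simp_all
    moreover have "pick I b < pick I a" if "b < a" using that ab(1) by (intro pick_mono) simp_all
    ultimately show "a = b" using ab(3) by (cases a b rule: linorder_cases) simp_all
  qed
  moreover have "pick I ` {..<card I} = I"
  proof
    show "pick I ` {..<card I} \<subseteq> I"
    proof (rule image_subsetI)
      fix a assume "a \<in> {..<card I}"
      then show "pick I a \<in> I" by (intro pick_in_set) simp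
    qed
    show "I \<subseteq> pick I ` {..<card I}"
    proof
      fix i assume i: "i \<in> I"
      have "{a \<in> I. a < i} \<subset> I" using i by blast
      then have "card {a \<in> I. a < i} < card I" by (rule psubset_card_mono[OF fin])
      then show "i \<in> pick I ` {..<card I}"
        using pick_card_in_set[OF i] by (intro image_eqI[where x = "card {a \<in> I. a < i}"]) simp_all
    qed
  qed
  ultimately show ?thesis unfolding bij_betw_def ..
qed

definition row_on_cols :: "'a::field mat \<Rightarrow> nat set \<Rightarrow> nat \<Rightarrow> nat \<Rightarrow> 'a" where
  "row_on_cols R J i = (\<lambda>k. if k < card J then R $$ (i, pick J k) else 0)"

lemma submatrix_carrier_mat:
  assumes "R \<in> carrier_mat nr nc" "I \<subseteq> {..<nr}" "J \<subseteq> {..<nc}"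
  shows "submatrix R I J \<in> carrier_mat (card I) (card J)"
proof -
  have "{i. i < dim_row R \<and> i \<in> I} = I" "{j. j < dim_col R \<and> j \<in> J} = J"
    using assms by auto
  then show ?thesis by (intro carrier_matI) (simp_all add: dim_submatrix)
qed

lemma row_funs_submatrix:
  assumes R: "R \<in> carrier_mat nr nc" and I: "I \<subseteq> {..<nr}" and J: "J \<subseteq> {..<nc}"
  shows "row_funs (submatrix R I J) = row_on_cols R J ` I"
proof -
  have C: "submatrix R I J \<in> carrier_mat (card I) (card J)" by (rule submatrix_carrier_mat[OF assms])
  have "{i. i < dim_row R \<and> i \<in> I} = I" "{j. j < dim_col R \<and> j \<in> J} = J"
    using R I J by auto
  then have entry: "submatrix R I J $$ (r, k) = R $$ (pick I r, pick J k)"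
    if "r < card I" "k < card J" for r k
    using that by (intro submatrix_index) simp_all
  have "row_funs (submatrix R I J) = row_on_cols R J ` pick I ` {..<card I}"
    unfolding row_funs_def image_image using C
    by (intro image_cong) (auto simp: row_on_cols_def entry fun_eq_iff)
  also have "\<dots> = row_on_cols R J ` I"
    using bij_betw_pick[OF finite_subset[OF I finite_lessThan]] by (simp add: bij_betw_def)
  finally show ?thesis .
qed

lemma rank_submatrix_eq_rows_rank:
  assumes "R \<in> carrier_mat nr nc" "I \<subseteq> {..<nr}" "J \<subseteq> {..<nc}"
  shows "vec_space.rank (card I) (submatrix R I J) = rows_rank (card J) (row_on_cols R J ` I)"
  using vec_space.rank_eq_rows_rank[OF submatrix_carrier_mat[OF assms]] row_funs_submatrix[OF assms]
  by simp

lemma invertible_mat_iff_det_nonzero: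
  assumes A: "A \<in> carrier_mat n n"
  shows "invertible_mat A \<longleftrightarrow> det A \<noteq> (0::'a::field)"
proof
  assume "invertible_mat A"
  then obtain B where B: "A * B = 1\<^sub>m n" "B * A = 1\<^sub>m (dim_row B)"
    using A unfolding invertible_mat_def inverts_mat_def by auto
  have "B \<in> carrier_mat n n"
    using arg_cong[OF B(1), of dim_col] arg_cong[OF B(2), of dim_col] A by auto
  then have "A \<in> Units (ring_mat TYPE('a) n ())"
    using A B unfolding Units_def ring_mat_def by auto
  then show "det A \<noteq> 0" by (rule unit_imp_det_non_zero)
next
  assume "det A \<noteq> 0"
  then have "A \<in> Units (ring_mat TYPE('a) n ())" by (rule det_non_zero_imp_unit[OF A])
  then show "invertible_mat A"
    using A unfolding Units_def ring_mat_def invertible_mat_def inverts_mat_def by auto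
qed

lemma invertible_mat_iff_trivial_kernel:
  assumes "A \<in> carrier_mat n n"
  shows "invertible_mat A \<longleftrightarrow> (\<forall>v\<in>carrier_vec n. A *\<^sub>v v = 0\<^sub>v n \<longrightarrow> v = (0\<^sub>v n :: 'a::field vec))"
  using invertible_mat_iff_det_nonzero[OF assms] det_0_iff_vec_prod_zero_field[OF assms] by blast

lemma mult_mat_vec_index_sum:
  assumes "A \<in> carrier_mat nr nc" "v \<in> carrier_vec nc" "i < nr"
  shows "(A *\<^sub>v v) $ i = (\<Sum>j<nc. A $$ (i, j) * v $ j)"
  using assms by (auto simp: scalar_prod_def atLeast0LessThan intro!: sum.cong)

lemma row_kernel_of_invertible:
  assumes R: "R \<in> carrier_mat L L" and inv: "invertible_mat R" and J: "J \<subseteq> {..<L}"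
  shows "row_kernel (card J) (row_on_cols R J ` {..<L}) = {\<lambda>_. 0}"
proof -
  have "x = (\<lambda>_. 0)" if x: "x \<in> row_kernel (card J) (row_on_cols R J ` {..<L})" for x
  proof -
    have bij: "bij_betw (pick J) {..<card J} J"
      by (rule bij_betw_pick[OF finite_subset[OF J finite_lessThan]])
    txt \<open>Spread \<open>x\<close> over the columns \<open>J\<close>; \<open>card {a \<in> J. a < j}\<close> inverts \<open>pick J\<close>.\<close>
    define v where "v = vec L (\<lambda>j. if j \<in> J then x (card {a \<in> J. a < j}) else 0)"
    have v: "v \<in> carrier_vec L" by (simp add: v_def)
    have v_pick: "v $ pick J k = x k" if "k < card J" for k
    proof -
      have "pick J k \<in> J" using that by (intro pick_in_set) simp
      moreover have "card {a \<in> J. a < pick J k} = k" using that by (intro card_pick) simp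
      ultimately show ?thesis using J by (auto simp: v_def)
    qed
    have "R *\<^sub>v v = 0\<^sub>v L"
    proof (rule eq_vecI)
      fix i assume "i < dim_vec (0\<^sub>v L :: 'a vec)"
      then have i: "i < L" by simp
      have "(R *\<^sub>v v) $ i = (\<Sum>j<L. R $$ (i, j) * v $ j)"
        by (rule mult_mat_vec_index_sum[OF R v i])
      also have "\<dots> = (\<Sum>j\<in>J. R $$ (i, j) * v $ j)"
        using J by (intro sum.mono_neutral_right) (auto simp: v_def)
      also have "\<dots> = (\<Sum>k<card J. R $$ (i, pick J k) * v $ pick J k)"
        by (rule sum.reindex_bij_betw[OF bij, symmetric])
      also have "\<dots> = row_dot (card J) (row_on_cols R J i) x"
        unfolding row_dot_def row_on_cols_def by (intro sum.cong) (simp_all add: v_pick)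
      also have "\<dots> = 0" using x i by (simp add: row_kernel_def)
      finally show "(R *\<^sub>v v) $ i = 0\<^sub>v L $ i" using i by simp
    qed (use R in simp)
    then have "v = 0\<^sub>v L" using inv v invertible_mat_iff_trivial_kernel[OF R] by blast
    show ?thesis
    proof
      fix k show "x k = 0"
      proof (cases "k < card J")
        case True
        then have "pick J k < L" using J pick_in_set[of k J] by auto
        then show ?thesis using v_pick[OF True] \<open>v = 0\<^sub>v L\<close> by simp
      next
        case False
        then show ?thesis using x by (simp add: row_kernel_def)
      qed
    qed
  qed
  then show ?thesis using zero_in_row_kernel by blast
qed

lemma invertible_submatrix_if_row_kernel_trivial:
  assumes R: "R \<in> carrier_mat nr nc" and I: "I \<subseteq> {..<nr}" and J: "J \<subseteq> {..<nc}"
    and card: "card I = card J" and ker: "row_kernel (card J) (row_on_cols R J ` I) = {\<lambda>_. 0}"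
  shows "invertible_mat (submatrix R I J)"
proof -
  let ?B = "submatrix R I J" and ?c = "card J"
  have B: "?B \<in> carrier_mat ?c ?c" using submatrix_carrier_mat[OF R I J] card by simp
  have "v = 0\<^sub>v ?c" if v: "v \<in> carrier_vec ?c" "?B *\<^sub>v v = 0\<^sub>v ?c" for v
  proof -
    define x where "x = (\<lambda>k. if k < ?c then v $ k else 0)"
    have "(\<Sum>k<?c. ?B $$ (i, k) * x k) = 0" if "i < ?c" for i
    proof -
      have "(\<Sum>k<?c. ?B $$ (i, k) * x k) = (?B *\<^sub>v v) $ i"
        using mult_mat_vec_index_sum[OF B v(1) that] by (simp add: x_def)
      then show ?thesis using v(2) that by simp
    qed
    then have "\<forall>r\<in>row_funs ?B. row_dot ?c r x = 0"
      using orthogonal_row_funs_iff[of ?B x] B by simp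
    then have "x \<in> row_kernel ?c (row_on_cols R J ` I)"
      using row_funs_submatrix[OF R I J] by (simp add: row_kernel_def x_def)
    then have "x = (\<lambda>_. 0)" using ker by simp
    then have x0: "x i = 0" for i by simp
    have "v $ i = 0" if "i < ?c" for i using x0[of i] that by (simp add: x_def)
    then show ?thesis using v(1) by (intro eq_vecI) auto
  qed
  then show ?thesis using invertible_mat_iff_trivial_kernel[OF B] by blast
qed

lemma Collect_inv_permutes:
  assumes "p permutes S"
  shows "{m \<in> S. P (inv_into UNIV p m)} = p ` {m \<in> S. P m}"
proof
  show "{m \<in> S. P (inv_into UNIV p m)} \<subseteq> p ` {m \<in> S. P m}"
  proof
    fix m assume m: "m \<in> {m \<in> S. P (inv_into UNIV p m)}"
    then have "inv_into UNIV p m \<in> S" using permutes_in_image[OF permutes_inv[OF assms]] by simp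
    then show "m \<in> p ` {m \<in> S. P m}"
      using m permutes_inverses(1)[OF assms] by (intro image_eqI[where x = "inv_into UNIV p m"]) auto
  qed
  show "p ` {m \<in> S. P m} \<subseteq> {m \<in> S. P (inv_into UNIV p m)}"
    using permutes_inverses(2)[OF assms] permutes_in_image[OF assms] by auto
qed

lemma Icompl_Iset: "Icompl L (Iset m) = {Suc m..L}"
  by (auto simp: Icompl_def Iset_def)

lemma subA_eq_submatrix:
  assumes "S \<subseteq> {1..}" "S' \<subseteq> {1..}"
  shows "subA A S S' = submatrix (red A) ((\<lambda>i. i - 1) ` S) ((\<lambda>j. j - 1) ` S')"
  using assms unfolding subA_def by (simp add: Int_absorb2)

lemma card_image_pred:
  assumes "S \<subseteq> {1..}" shows "card ((\<lambda>i. i - 1) ` S) = card (S :: nat set)"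
proof (rule card_image, rule inj_onI)
  fix x y assume "x \<in> S" "y \<in> S" "x - 1 = y - 1"
  moreover have "1 \<le> x" "1 \<le> y" using assms \<open>x \<in> S\<close> \<open>y \<in> S\<close> by auto
  ultimately show "x = y" by arith
qed

lemma image_pred_subset: "S \<subseteq> {1..L} \<Longrightarrow> (\<lambda>i. i - 1) ` S \<subseteq> {..<L::nat}"
  by (force dest: subsetD)

lemma image_pred_atLeastAtMost: "(\<lambda>i. i - 1) ` {1..L} = {..<L::nat}"
proof
  show "{..<L} \<subseteq> (\<lambda>i. i - 1) ` {1..L}"
  proof
    fix x assume "x \<in> {..<L}"
    then show "x \<in> (\<lambda>i. i - 1) ` {1..L}" by (intro image_eqI[where x = "Suc x"]) auto
  qed
qed auto

lemma permutes_image_subset: "p permutes Iset L \<Longrightarrow> X \<subseteq> {1..L} \<Longrightarrow> p ` X \<subseteq> {1..L}"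
  using permutes_in_image[of p "Iset L"] by (auto simp: Iset_def)

(* Row p m of A mod gamma restricted to the columns S', with the 1-based indices of subA and Jset
   shifted to the 0-based indices of matrices. *)
definition reduced_row :: "int mat \<Rightarrow> nat set \<Rightarrow> (nat \<Rightarrow> nat) \<Rightarrow> nat \<Rightarrow> nat \<Rightarrow> 'p::prime_card mod_ring" where
  "reduced_row A S' p m = row_on_cols (red A) ((\<lambda>j. j - 1) ` S') (p m - 1)"

lemma reduced_row_image:
  "reduced_row A S' p ` X = row_on_cols (red A) ((\<lambda>j. j - 1) ` S') ` (\<lambda>i. i - 1) ` p ` X"
  by (simp add: reduced_row_def image_image)

lemma rankF_subA_permuted:
  fixes A :: "int mat"
  assumes A: "A \<in> carrier_mat L L" and p: "p permutes Iset L"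
    and X: "X \<subseteq> {1..L}" and S': "S' \<subseteq> {1..L}"
  shows "rankF (subA A (p ` X) S' :: 'p::prime_card mod_ring mat)
    = rows_rank (card S') (reduced_row A S' p ` X :: (nat \<Rightarrow> 'p mod_ring) set)"
proof -
  have R: "(red A :: 'p mod_ring mat) \<in> carrier_mat L L" using A by (simp add: red_def)
  have S: "p ` X \<subseteq> {1..L}" by (rule permutes_image_subset[OF p X])
  have sub: "subA A (p ` X) S'
      = (submatrix (red A) ((\<lambda>i. i - 1) ` p ` X) ((\<lambda>j. j - 1) ` S') :: 'p mod_ring mat)"
    using S S' by (intro subA_eq_submatrix) auto
  have "dim_row (subA A (p ` X) S' :: 'p mod_ring mat) = card ((\<lambda>i. i - 1) ` p ` X)"
    unfolding sub using submatrix_carrier_mat[OF R image_pred_subset[OF S] image_pred_subset[OF S']] by simp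
  moreover have "card ((\<lambda>j. j - 1) ` S') = card S'" using S' by (intro card_image_pred) auto
  ultimately show ?thesis
    unfolding rankF_def reduced_row_image sub
    using rank_submatrix_eq_rows_rank[OF R image_pred_subset[OF S] image_pred_subset[OF S']] by simp
qed

lemma Jset_iff_rank_jumps:
  fixes A :: "int mat"
  assumes A: "A \<in> carrier_mat L L" and p: "p permutes Iset L"
    and k: "k \<in> Iset (2*L - 1)" and m: "m \<in> {1..L}"
  shows "k \<in> Jset TYPE('p::prime_card) L A Lam \<pi> p m \<longleftrightarrow>
    m \<in> rank_jumps (card (Lset L Lam \<pi> k))
           (reduced_row A (Lset L Lam \<pi> k) p :: nat \<Rightarrow> nat \<Rightarrow> 'p mod_ring) 1 L"
proof -
  have S': "Lset L Lam \<pi> k \<subseteq> {1..L}" by (auto simp: Lset_def Iset_def)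
  have "rankF (subA A (p ` X) (Lset L Lam \<pi> k) :: 'p mod_ring mat)
      = rows_rank (card (Lset L Lam \<pi> k)) (reduced_row A (Lset L Lam \<pi> k) p ` X :: (nat \<Rightarrow> 'p mod_ring) set)"
    if "X \<subseteq> {1..L}" for X
    by (rule rankF_subA_permuted[OF A p that S'])
  then show ?thesis using m k by (simp add: Jset_def rank_jumps_def Icompl_Iset)
qed

lemma row_kernel_reduced_rows:
  fixes A :: "int mat"
  assumes A: "A \<in> carrier_mat L L" and inv: "invertible_mat (red A :: 'p::prime_card mod_ring mat)"
    and p: "p permutes Iset L" and S': "S' \<subseteq> {1..L}"
  shows "row_kernel (card S') (reduced_row A S' p ` {1..L} :: (nat \<Rightarrow> 'p mod_ring) set) = {\<lambda>_. 0}"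
proof -
  have "(reduced_row A S' p ` {1..L} :: (nat \<Rightarrow> 'p mod_ring) set)
      = row_on_cols (red A) ((\<lambda>j. j - 1) ` S') ` {..<L}"
    using permutes_image[OF p] image_pred_atLeastAtMost[of L] by (simp add: reduced_row_image Iset_def)
  moreover have "card ((\<lambda>j. j - 1) ` S') = card S'" using S' by (intro card_image_pred) auto
  moreover have "(red A :: 'p mod_ring mat) \<in> carrier_mat L L" using A by (simp add: red_def)
  ultimately show ?thesis
    using row_kernel_of_invertible[OF _ inv image_pred_subset[OF S']] by simp
qed

lemma invertible_subA_permuted:
  fixes A :: "int mat"
  assumes A: "A \<in> carrier_mat L L" and p: "p permutes Iset L"
    and D: "D \<subseteq> {1..L}" and S': "S' \<subseteq> {1..L}" and card: "card D = card S'"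
    and ker: "row_kernel (card S') (reduced_row A S' p ` D :: (nat \<Rightarrow> 'p::prime_card mod_ring) set) = {\<lambda>_. 0}"
  shows "invertible_mat (subA A (p ` D) S' :: 'p mod_ring mat)"
proof -
  have R: "(red A :: 'p mod_ring mat) \<in> carrier_mat L L" using A by (simp add: red_def)
  have S: "p ` D \<subseteq> {1..L}" by (rule permutes_image_subset[OF p D])
  have "subA A (p ` D) S'
      = (submatrix (red A) ((\<lambda>i. i - 1) ` p ` D) ((\<lambda>j. j - 1) ` S') :: 'p mod_ring mat)"
    using S S' by (intro subA_eq_submatrix) auto
  moreover have "card ((\<lambda>i. i - 1) ` p ` D) = card (p ` D)" using S by (intro card_image_pred) auto
  moreover have "card (p ` D) = card D"
    by (rule card_image[OF inj_on_subset[OF permutes_inj[OF p] subset_UNIV]])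
  moreover have "card ((\<lambda>j. j - 1) ` S') = card S'" using S' by (intro card_image_pred) auto
  ultimately show ?thesis
    using invertible_submatrix_if_row_kernel_trivial[OF R image_pred_subset[OF S] image_pred_subset[OF S']]
      ker card by (simp add: reduced_row_image)
qed

theorem lemma1:
  fixes L :: nat and A :: "int mat" and Lam :: "nat \<Rightarrow> (real ^ 'n) set"
    and \<pi> \<pi>\<alpha> :: "nat \<Rightarrow> nat" and k :: nat
  assumes "A \<in> carrier_mat L L"
    and "invertible_mat (red A :: 'p::prime_card mod_ring mat)"
    and "\<forall>i \<in> Iset (2*L). is_lattice (Lam i)"
    and "\<forall>i \<in> Iset (2*L - 1). Lam i \<subseteq> Lam (i+1)"
    and "\<pi> permutes Iset (2*L)"
    and "\<forall>l \<in> Iset L. Lam (\<pi> (2*l - 1)) \<subseteq> Lam (\<pi> (2*l))"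
    and "\<pi>\<alpha> permutes Iset L"
    and "k \<in> Iset (2*L - 1)"
  shows "let Mk = {m \<in> Iset L. k \<in> Jset TYPE('p) L A Lam \<pi> \<pi>\<alpha> (inv_into UNIV \<pi>\<alpha> m)};
             Lk = Lset L Lam \<pi> k
         in card Mk = card Lk \<and> invertible_mat (subA A Mk Lk :: 'p mod_ring mat)"
proof -
  define Lk where "Lk = Lset L Lam \<pi> k"
  define \<rho> where "\<rho> = (reduced_row A Lk \<pi>\<alpha> :: nat \<Rightarrow> nat \<Rightarrow> 'p mod_ring)"
  define D where "D = rank_jumps (card Lk) \<rho> 1 L"
  have Lk: "Lk \<subseteq> {1..L}" by (auto simp: Lk_def Lset_def Iset_def)
  have D: "D \<subseteq> {1..L}" by (auto simp: D_def rank_jumps_def)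
  have "{m \<in> Iset L. k \<in> Jset TYPE('p) L A Lam \<pi> \<pi>\<alpha> m} = D"
    using Jset_iff_rank_jumps[OF assms(1,7,8)] D by (auto simp: D_def \<rho>_def Lk_def Iset_def)
  then have Mk: "{m \<in> Iset L. k \<in> Jset TYPE('p) L A Lam \<pi> \<pi>\<alpha> (inv_into UNIV \<pi>\<alpha> m)} = \<pi>\<alpha> ` D"
    using Collect_inv_permutes[OF assms(7), of "\<lambda>m. k \<in> Jset TYPE('p) L A Lam \<pi> \<pi>\<alpha> m"] by simp
  have full: "row_kernel (card Lk) (\<rho> ` {1..L}) = {\<lambda>_. 0}"
    unfolding \<rho>_def by (rule row_kernel_reduced_rows[OF assms(1,2,7) Lk])
  have "card D = card Lk"
    using card_rank_jumps[of 1 L "card Lk" \<rho>] rows_rank_eq_if_row_kernel_trivial[OF full]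
    by (simp add: D_def)
  moreover have "row_kernel (card Lk) (\<rho> ` D) = {\<lambda>_. 0}"
    using row_kernel_rank_jumps[of 1 L "card Lk" \<rho>] full by (simp add: D_def)
  ultimately have "card (\<pi>\<alpha> ` D) = card Lk" "invertible_mat (subA A (\<pi>\<alpha> ` D) Lk :: 'p mod_ring mat)"
    using card_image[OF inj_on_subset[OF permutes_inj[OF assms(7)]]]
      invertible_subA_permuted[OF assms(1,7) D Lk] by (auto simp: \<rho>_def)
  then show ?thesis unfolding Let_def Mk Lk_def[symmetric] by simp
qed

end
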